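(* Let $G=\prod_{1\leq i\leq k}C_{p^{r_i}}$ be a finite non-cyclic abelian $p$-group with $r_1\geq r_2\geq\dots\geq r_k$ and $k\geq 2$. Then $\Delta_D(G)^*$ is disconnected if and only if $r_2=1$.
   Context: $C_n$ denotes the cyclic group of order $n$. The deep commuting graph $\Delta_D(G)$ has vertex set $G$, distinct vertices adjacent iff their preimages commute in a Schur cover $\tilde G$ of $G$ (a central extension $\{e\}\to M(G)\to\tilde G\to G\to\{e\}$ with kernel contained in $Z(\tilde G)\cap[\tilde G,\tilde G]$, of maximal order; $M(G)$ the Schur multiplier). A vertex is dominant if adjacent to every other vertex; the reduced graph $\Gamma^*$ is the subgraph induced by the non-dominant vertices. *)

theory Defs
  imports "HOL-Algebra.Algebra"
begin

definition group_center :: "('a, 'b) monoid_scheme \<Rightarrow> 'a set" where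
  "group_center H = {z \<in> carrier H. \<forall>h \<in> carrier H. z \<otimes>\<^bsub>H\<^esub> h = h \<otimes>\<^bsub>H\<^esub> z}"

definition stem_extension ::
  "('a, 'c) monoid_scheme \<Rightarrow> ('b, 'd) monoid_scheme \<Rightarrow> ('a \<Rightarrow> 'b) \<Rightarrow> bool" where
  "stem_extension H G \<pi> \<longleftrightarrow> group H \<and> group G \<and> \<pi> \<in> hom H G \<and>
     \<pi> ` carrier H = carrier G \<and>
     kernel H G \<pi> \<subseteq> group_center H \<inter> derived H (carrier H)"

text \<open>Every finite group is isomorphic to one with carrier in nat, so maximality is
  taken over stem extensions whose groups are carried by nat.\<close>
definition schur_cover ::
  "nat monoid \<Rightarrow> ('b, 'd) monoid_scheme \<Rightarrow> (nat \<Rightarrow> 'b) \<Rightarrow> bool" where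
  "schur_cover H G \<pi> \<longleftrightarrow> finite (carrier H) \<and> stem_extension H G \<pi> \<and>
     (\<forall>(H' :: nat monoid) \<pi>'. finite (carrier H') \<and> stem_extension H' G \<pi>'
        \<longrightarrow> card (carrier H') \<le> card (carrier H))"

definition deep_adj ::
  "nat monoid \<Rightarrow> ('b, 'd) monoid_scheme \<Rightarrow> (nat \<Rightarrow> 'b) \<Rightarrow> 'b \<Rightarrow> 'b \<Rightarrow> bool" where
  "deep_adj H G \<pi> x y \<longleftrightarrow> x \<in> carrier G \<and> y \<in> carrier G \<and> x \<noteq> y \<and>
     (\<exists>a \<in> carrier H. \<exists>b \<in> carrier H. \<pi> a = x \<and> \<pi> b = y \<and>
        a \<otimes>\<^bsub>H\<^esub> b = b \<otimes>\<^bsub>H\<^esub> a)"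

definition dominant :: "'a set \<Rightarrow> ('a \<Rightarrow> 'a \<Rightarrow> bool) \<Rightarrow> 'a \<Rightarrow> bool" where
  "dominant V E v \<longleftrightarrow> v \<in> V \<and> (\<forall>w \<in> V. w \<noteq> v \<longrightarrow> E v w)"

definition reduced_vertices :: "'a set \<Rightarrow> ('a \<Rightarrow> 'a \<Rightarrow> bool) \<Rightarrow> 'a set" where
  "reduced_vertices V E = {v \<in> V. \<not> dominant V E v}"

definition induced_disconnected :: "'a set \<Rightarrow> ('a \<Rightarrow> 'a \<Rightarrow> bool) \<Rightarrow> bool" where
  "induced_disconnected W E \<longleftrightarrow>
     (\<exists>u \<in> W. \<exists>w \<in> W. (u, w) \<notin> {(a, b). a \<in> W \<and> b \<in> W \<and> E a b}\<^sup>*)"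

end

(* Write G = C_{n_1} x ... x C_{n_k} with n_k | ... | n_1. In a central extension of G the
   commutator of lifts of x and y depends only on x and y and is bilinear in them, so it is the
   image of the vector of 2x2 minors (x_i y_j - x_j y_i mod n_j)_{i<j} under a homomorphism from
   M = prod_{i<j} C_{n_j} whose image contains the derived subgroup. A stem extension is
   therefore of order at most |G| |M|, while the 2-cocycle (x, y) |-> (x_i y_j)_{i<j} yields a stem
   extension of exactly that order. In a Schur cover the homomorphism is thus injective: x and y
   are adjacent in the deep commuting graph iff all minors vanish modulo n_j.
   For n_i = p^{r_i}: if r_2 = 1, along any path of non-dominant vertices starting at e_1 every
   coordinate except the first stays divisible by p, so e_1 and e_2 lie in different components.
   If r_2 >= 2, every non-dominant x is joined to the hub p^{r_2 - 1} e_1, following x, p x,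
   p^2 x, ... until the next multiple is dominant. *)

theory Submission
  imports Defs
begin

section \<open>Commutators and Schur covers\<close>

definition commutator :: "('a, 'b) monoid_scheme \<Rightarrow> 'a \<Rightarrow> 'a \<Rightarrow> 'a" where
  "commutator G a b = a \<otimes>\<^bsub>G\<^esub> b \<otimes>\<^bsub>G\<^esub> inv\<^bsub>G\<^esub> a \<otimes>\<^bsub>G\<^esub> inv\<^bsub>G\<^esub> b"

context group
begin

lemma commutator_closed [simp]:
  "a \<in> carrier G \<Longrightarrow> b \<in> carrier G \<Longrightarrow> commutator G a b \<in> carrier G"
  by (simp add: commutator_def)

lemma commutator_eqI:
  assumes "a \<in> carrier G" "b \<in> carrier G" "z \<in> carrier G" and "a \<otimes> b = z \<otimes> (b \<otimes> a)"
  shows "commutator G a b = z"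
  using assms by (simp add: commutator_def m_assoc)

lemma commutator_eq_one_iff:
  assumes "a \<in> carrier G" "b \<in> carrier G"
  shows "commutator G a b = \<one> \<longleftrightarrow> a \<otimes> b = b \<otimes> a"
proof
  assume "commutator G a b = \<one>"
  then have "a \<otimes> b \<otimes> inv (b \<otimes> a) = \<one>"
    using assms by (simp add: commutator_def inv_mult_group m_assoc)
  then show "a \<otimes> b = b \<otimes> a"
    using assms by (metis inv_closed inv_inv m_closed inv_equality)
qed (use assms in \<open>simp add: commutator_eqI\<close>)

lemma commutator_swap:
  "a \<in> carrier G \<Longrightarrow> b \<in> carrier G \<Longrightarrow> commutator G a b = inv (commutator G b a)"
  by (simp add: commutator_def inv_mult_group m_assoc)

lemma derived_set_eq_commutators:
  "derived_set G (carrier G) = {commutator G a b | a b. a \<in> carrier G \<and> b \<in> carrier G}"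
  by (auto simp: commutator_def)

lemma additive_int_smult:
  fixes f :: "('i \<Rightarrow> int) \<Rightarrow> 'a"
  assumes f_closed: "\<And>u. f u \<in> carrier G"
    and f_add: "\<And>u v. f (\<lambda>i. u i + v i) = f u \<otimes> f v"
  shows "f (\<lambda>i. c * u i) = f u [^] c"
proof -
  have f_zero: "f (\<lambda>i. 0) = \<one>"
    using f_add[of "\<lambda>i. 0" "\<lambda>i. 0"] f_closed by (metis add_0 l_one one_closed right_cancel)
  have f_neg: "f (\<lambda>i. - v i) = inv (f v)" for v
    using f_add[of "\<lambda>i. - v i" v] f_zero f_closed by (simp add: inv_equality)
  have f_nat: "f (\<lambda>i. int m * v i) = f v [^] m" for m v
  proof (induction m)
    case (Suc m)
    have "f (\<lambda>i. int (Suc m) * v i) = f (\<lambda>i. int m * v i) \<otimes> f v"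
      by (simp add: f_add[symmetric] algebra_simps)
    then show ?case by (simp add: Suc.IH f_closed nat_pow_Suc)
  qed (simp add: f_zero)
  show ?thesis
  proof (cases c rule: int_cases2)
    case (nonneg m)
    then show ?thesis by (simp add: f_nat int_pow_int)
  next
    case (nonpos m)
    then have "f (\<lambda>i. c * u i) = inv (f (\<lambda>i. int m * u i))"
      by (simp add: f_neg[symmetric])
    then show ?thesis using nonpos f_closed by (simp add: f_nat int_pow_neg int_pow_int)
  qed
qed

end

lemma finite_group_nat_copy:
  fixes K :: "('a, 'b) monoid_scheme"
  assumes "group K" and "finite (carrier K)"
  obtains T :: "nat monoid" and f where "group T" and "f \<in> iso K T"
proof -
  interpret K: group K by fact
  obtain f :: "'a \<Rightarrow> nat" where "inj_on f (carrier K)"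
    using ex_bij_betw_finite_nat[OF assms(2)] bij_betw_def by blast
  define g where "g = inv_into (carrier K) f"
  have gf: "\<And>x. x \<in> carrier K \<Longrightarrow> g (f x) = x"
    using \<open>inj_on f (carrier K)\<close> by (simp add: g_def)
  define T :: "nat monoid" where
    "T = \<lparr>carrier = f ` carrier K, monoid.mult = (\<lambda>a b. f (g a \<otimes>\<^bsub>K\<^esub> g b)), one = f \<one>\<^bsub>K\<^esub>\<rparr>"
  have group_T: "group T"
  proof (rule groupI)
    fix x y z assume "x \<in> carrier T" "y \<in> carrier T" "z \<in> carrier T"
    then show "x \<otimes>\<^bsub>T\<^esub> y \<otimes>\<^bsub>T\<^esub> z = x \<otimes>\<^bsub>T\<^esub> (y \<otimes>\<^bsub>T\<^esub> z)"
      by (auto simp: T_def gf K.m_assoc)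
  next
    fix x assume x: "x \<in> carrier T"
    then show "\<one>\<^bsub>T\<^esub> \<otimes>\<^bsub>T\<^esub> x = x" by (auto simp: T_def gf)
    from x obtain y where "y \<in> carrier K" "x = f y" by (auto simp: T_def)
    then show "\<exists>z\<in>carrier T. z \<otimes>\<^bsub>T\<^esub> x = \<one>\<^bsub>T\<^esub>"
      by (intro bexI[of _ "f (inv\<^bsub>K\<^esub> y)"]) (auto simp: T_def gf)
  qed (auto simp: T_def gf)
  moreover have "f \<in> iso K T"
    using \<open>inj_on f (carrier K)\<close> by (auto simp: iso_def hom_def bij_betw_def T_def gf)
  ultimately show ?thesis by (rule that)
qed

lemma stem_extension_iso:
  assumes stem: "stem_extension K G \<sigma>" and iso: "f \<in> iso K T" and "group T"
  shows "stem_extension T G (\<sigma> \<circ> inv_into (carrier K) f)"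
proof -
  interpret K: group K using stem by (simp add: stem_extension_def)
  interpret f: group_hom K T f
    using iso \<open>group T\<close> by (simp add: group_hom_def group_hom_axioms_def iso_def)
  define g where "g = inv_into (carrier K) f"
  have "g \<in> iso T K" unfolding g_def using iso by (rule K.iso_set_sym)
  then have g_hom: "g \<in> hom T K" and g_bij: "bij_betw g (carrier T) (carrier K)"
    by (simp_all add: iso_def)
  have fg: "f (g a) = a" if "a \<in> carrier T" for a
    using that iso by (simp add: g_def iso_def bij_betw_def f_inv_into_f)
  have "group G" and \<sigma>: "\<sigma> \<in> hom K G" "\<sigma> ` carrier K = carrier G"
    and kernel: "kernel K G \<sigma> \<subseteq> group_center K \<inter> derived K (carrier K)"
    using stem by (auto simp: stem_extension_def)
  have hom: "\<sigma> \<circ> g \<in> hom T G" using g_hom \<sigma>(1) by (rule hom_compose)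
  have surj: "(\<sigma> \<circ> g) ` carrier T = carrier G"
    using g_bij \<sigma>(2) by (metis bij_betw_imp_surj_on image_comp)
  have "a \<in> group_center T \<inter> derived T (carrier T)" if a: "a \<in> kernel T G (\<sigma> \<circ> g)" for a
  proof -
    have aT: "a \<in> carrier T" and "g a \<in> kernel K G \<sigma>"
      using a hom_in_carrier[OF g_hom] by (auto simp: kernel_def)
    then have ga: "g a \<in> group_center K" "g a \<in> derived K (carrier K)" using kernel by auto
    have "a \<otimes>\<^bsub>T\<^esub> h = h \<otimes>\<^bsub>T\<^esub> a" if "h \<in> carrier T" for h
      using ga(1) that aT hom_in_carrier[OF g_hom] f.hom_mult[of "g a" "g h"] f.hom_mult[of "g h" "g a"]
      by (auto simp: group_center_def fg)
    moreover have "a \<in> f ` derived K (carrier K)" using ga(2) fg[OF aT] by force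
    ultimately show ?thesis
      using aT f.derived_img[of "carrier K"] iso by (auto simp: group_center_def iso_def bij_betw_def)
  qed
  then show ?thesis
    using \<open>group T\<close> \<open>group G\<close> hom surj unfolding stem_extension_def g_def[symmetric] by blast
qed

lemma schur_cover_card_ge:
  assumes cover: "schur_cover H G \<pi>" and stem: "stem_extension K G \<sigma>" and fin: "finite (carrier K)"
  shows "card (carrier K) \<le> card (carrier H)"
proof -
  have "group K" using stem by (simp add: stem_extension_def)
  then obtain T :: "nat monoid" and f where T: "group T" "f \<in> iso K T"
    by (rule finite_group_nat_copy[OF _ fin])
  then have bij: "bij_betw f (carrier K) (carrier T)" by (simp add: iso_def)
  have "stem_extension T G (\<sigma> \<circ> inv_into (carrier K) f)"
    using stem T(2,1) by (rule stem_extension_iso)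
  moreover have "finite (carrier T)" using bij fin by (simp add: bij_betw_finite)
  ultimately have "card (carrier T) \<le> card (carrier H)"
    using cover unfolding schur_cover_def by blast
  then show ?thesis using bij by (simp add: bij_betw_same_card)
qed

section \<open>Central extensions\<close>

locale central_extension =
  fixes H :: "('a, 'c) monoid_scheme" and G :: "('b, 'd) monoid_scheme" and \<pi> :: "'a \<Rightarrow> 'b"
  assumes group_H: "group H" and comm_group_G: "comm_group G"
    and hom: "\<pi> \<in> hom H G" and surj: "\<pi> ` carrier H = carrier G"
    and kernel_central: "kernel H G \<pi> \<subseteq> group_center H"
begin

sublocale H: group H by (rule group_H)
sublocale G: comm_group G by (rule comm_group_G)
sublocale ext: group_hom H G \<pi>
  by (simp add: group_hom_def group_hom_axioms_def hom H.group_axioms G.group_axioms)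

definition lift :: "'b \<Rightarrow> 'a" where
  "lift x = inv_into (carrier H) \<pi> x"

lemma lift_closed: "x \<in> carrier G \<Longrightarrow> lift x \<in> carrier H"
  and \<pi>_lift: "x \<in> carrier G \<Longrightarrow> \<pi> (lift x) = x"
  using surj by (auto simp: lift_def inv_into_into f_inv_into_f)

lemma kernel_commute: "z \<in> kernel H G \<pi> \<Longrightarrow> h \<in> carrier H \<Longrightarrow> z \<otimes>\<^bsub>H\<^esub> h = h \<otimes>\<^bsub>H\<^esub> z"
  using kernel_central by (auto simp: group_center_def)

lemma commutator_in_kernel:
  assumes "a \<in> carrier H" "b \<in> carrier H"
  shows "commutator H a b \<in> kernel H G \<pi>"
proof -
  have "\<pi> (commutator H a b) = commutator G (\<pi> a) (\<pi> b)"
    using assms by (simp add: commutator_def ext.hom_mult ext.hom_inv)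
  also have "\<dots> = \<one>\<^bsub>G\<^esub>"
    using assms by (simp add: G.commutator_eq_one_iff G.m_comm)
  finally show ?thesis using assms by (simp add: kernel_def)
qed

lemma commutator_mult_left:
  assumes a: "a \<in> carrier H" and a': "a' \<in> carrier H" and b: "b \<in> carrier H"
  shows "commutator H (a \<otimes>\<^bsub>H\<^esub> a') b = commutator H a b \<otimes>\<^bsub>H\<^esub> commutator H a' b"
proof -
  define z where "z = commutator H a' b"
  have z: "z \<in> carrier H" using a' b by (simp add: z_def)
  have z_central: "z \<otimes>\<^bsub>H\<^esub> h = h \<otimes>\<^bsub>H\<^esub> z" if "h \<in> carrier H" for h
    using a' b that by (simp add: z_def commutator_in_kernel kernel_commute)
  have conj: "a' \<otimes>\<^bsub>H\<^esub> b \<otimes>\<^bsub>H\<^esub> inv\<^bsub>H\<^esub> a' = z \<otimes>\<^bsub>H\<^esub> b"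
    using a' b by (simp add: z_def commutator_def H.m_assoc)
  have "commutator H (a \<otimes>\<^bsub>H\<^esub> a') b
      = a \<otimes>\<^bsub>H\<^esub> (a' \<otimes>\<^bsub>H\<^esub> b \<otimes>\<^bsub>H\<^esub> inv\<^bsub>H\<^esub> a') \<otimes>\<^bsub>H\<^esub> inv\<^bsub>H\<^esub> a \<otimes>\<^bsub>H\<^esub> inv\<^bsub>H\<^esub> b"
    using a a' b by (simp add: commutator_def H.inv_mult_group H.m_assoc)
  also have "\<dots> = (a \<otimes>\<^bsub>H\<^esub> z) \<otimes>\<^bsub>H\<^esub> (b \<otimes>\<^bsub>H\<^esub> inv\<^bsub>H\<^esub> a \<otimes>\<^bsub>H\<^esub> inv\<^bsub>H\<^esub> b)"
    using a b z by (simp add: conj H.m_assoc)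
  also have "\<dots> = z \<otimes>\<^bsub>H\<^esub> commutator H a b"
    using a b z by (simp add: z_central[OF a, symmetric] H.m_assoc commutator_def)
  also have "\<dots> = commutator H a b \<otimes>\<^bsub>H\<^esub> z"
    using a b by (simp add: z_central)
  finally show ?thesis by (simp add: z_def)
qed

lemma commutator_kernel_left:
  assumes "a \<in> carrier H" "z \<in> kernel H G \<pi>" "b \<in> carrier H"
  shows "commutator H (a \<otimes>\<^bsub>H\<^esub> z) b = commutator H a b"
proof -
  have z: "z \<in> carrier H" using assms(2) by (simp add: kernel_def)
  have "commutator H z b = \<one>\<^bsub>H\<^esub>"
    using assms z kernel_commute[OF assms(2,3)] by (simp add: H.commutator_eq_one_iff)
  then show ?thesis using assms z by (simp add: commutator_mult_left)
qed

definition comm_pairing :: "'b \<Rightarrow> 'b \<Rightarrow> 'a" where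
  "comm_pairing x y = commutator H (lift x) (lift y)"

lemma commutator_eq_comm_pairing:
  assumes "a \<in> carrier H" "b \<in> carrier H"
  shows "commutator H a b = comm_pairing (\<pi> a) (\<pi> b)"
proof -
  have lift_eq: "commutator H c d = commutator H (lift (\<pi> c)) d"
    if c: "c \<in> carrier H" and d: "d \<in> carrier H" for c d
  proof -
    let ?l = "lift (\<pi> c)"
    have l: "?l \<in> carrier H" "\<pi> ?l = \<pi> c" using c by (simp_all add: lift_closed \<pi>_lift)
    then have z: "inv\<^bsub>H\<^esub> ?l \<otimes>\<^bsub>H\<^esub> c \<in> kernel H G \<pi>"
      using c by (simp add: kernel_def ext.hom_mult ext.hom_inv)
    have "?l \<otimes>\<^bsub>H\<^esub> (inv\<^bsub>H\<^esub> ?l \<otimes>\<^bsub>H\<^esub> c) = c"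
      using l c by (simp add: H.m_assoc[symmetric])
    then show ?thesis using commutator_kernel_left[OF l(1) z d] by simp
  qed
  have l: "lift (\<pi> a) \<in> carrier H" "lift (\<pi> b) \<in> carrier H"
    using assms by (simp_all add: lift_closed)
  have "commutator H a b = inv\<^bsub>H\<^esub> (commutator H b (lift (\<pi> a)))"
    using assms l by (simp add: lift_eq[of a b] H.commutator_swap[of "lift (\<pi> a)" b])
  also have "\<dots> = inv\<^bsub>H\<^esub> (commutator H (lift (\<pi> b)) (lift (\<pi> a)))"
    using assms l by (simp add: lift_eq[of b])
  also have "\<dots> = comm_pairing (\<pi> a) (\<pi> b)"
    using l by (simp add: H.commutator_swap[of "lift (\<pi> a)"] comm_pairing_def)
  finally show ?thesis .
qed

lemma comm_pairing_in_kernel: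
  "x \<in> carrier G \<Longrightarrow> y \<in> carrier G \<Longrightarrow> comm_pairing x y \<in> kernel H G \<pi>"
  by (simp add: comm_pairing_def commutator_in_kernel lift_closed)

lemma comm_pairing_closed:
  "x \<in> carrier G \<Longrightarrow> y \<in> carrier G \<Longrightarrow> comm_pairing x y \<in> carrier H"
  by (simp add: comm_pairing_def lift_closed)

lemma comm_pairing_swap:
  "x \<in> carrier G \<Longrightarrow> y \<in> carrier G \<Longrightarrow> comm_pairing x y = inv\<^bsub>H\<^esub> (comm_pairing y x)"
  unfolding comm_pairing_def by (rule H.commutator_swap) (simp_all add: lift_closed)

lemma comm_pairing_self: "x \<in> carrier G \<Longrightarrow> comm_pairing x x = \<one>\<^bsub>H\<^esub>"
  by (simp add: comm_pairing_def lift_closed H.commutator_eq_one_iff)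

lemma comm_pairing_mult_left:
  assumes "x \<in> carrier G" "x' \<in> carrier G" "y \<in> carrier G"
  shows "comm_pairing (x \<otimes>\<^bsub>G\<^esub> x') y = comm_pairing x y \<otimes>\<^bsub>H\<^esub> comm_pairing x' y"
proof -
  have "comm_pairing (x \<otimes>\<^bsub>G\<^esub> x') y = commutator H (lift x \<otimes>\<^bsub>H\<^esub> lift x') (lift y)"
    using assms by (simp add: commutator_eq_comm_pairing lift_closed \<pi>_lift ext.hom_mult)
  then show ?thesis
    using assms by (simp add: commutator_mult_left lift_closed comm_pairing_def)
qed

lemma comm_pairing_mult_right:
  assumes "x \<in> carrier G" "y \<in> carrier G" "y' \<in> carrier G"
  shows "comm_pairing x (y \<otimes>\<^bsub>G\<^esub> y') = comm_pairing x y \<otimes>\<^bsub>H\<^esub> comm_pairing x y'"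
proof -
  have "comm_pairing x (y \<otimes>\<^bsub>G\<^esub> y') = inv\<^bsub>H\<^esub> (comm_pairing y' x) \<otimes>\<^bsub>H\<^esub> inv\<^bsub>H\<^esub> (comm_pairing y x)"
    using assms by (simp add: comm_pairing_swap[of x] comm_pairing_mult_left comm_pairing_closed
        H.inv_mult_group)
  also have "\<dots> = comm_pairing x y' \<otimes>\<^bsub>H\<^esub> comm_pairing x y"
    using assms by (simp add: comm_pairing_swap[of x])
  also have "\<dots> = comm_pairing x y \<otimes>\<^bsub>H\<^esub> comm_pairing x y'"
    using assms kernel_commute[OF comm_pairing_in_kernel comm_pairing_closed] by blast
  finally show ?thesis .
qed

lemma commuting_preimages_iff:
  assumes "x \<in> carrier G" "y \<in> carrier G"
  shows "(\<exists>a\<in>carrier H. \<exists>b\<in>carrier H. \<pi> a = x \<and> \<pi> b = y \<and> a \<otimes>\<^bsub>H\<^esub> b = b \<otimes>\<^bsub>H\<^esub> a)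
    \<longleftrightarrow> comm_pairing x y = \<one>\<^bsub>H\<^esub>"
proof
  assume "\<exists>a\<in>carrier H. \<exists>b\<in>carrier H. \<pi> a = x \<and> \<pi> b = y \<and> a \<otimes>\<^bsub>H\<^esub> b = b \<otimes>\<^bsub>H\<^esub> a"
  then obtain a b where ab: "a \<in> carrier H" "b \<in> carrier H" "\<pi> a = x" "\<pi> b = y"
    and "a \<otimes>\<^bsub>H\<^esub> b = b \<otimes>\<^bsub>H\<^esub> a"
    by blast
  then have "commutator H a b = \<one>\<^bsub>H\<^esub>" by (simp add: H.commutator_eq_one_iff)
  then show "comm_pairing x y = \<one>\<^bsub>H\<^esub>"
    using commutator_eq_comm_pairing[OF ab(1,2)] ab(3,4) by simp
next
  assume "comm_pairing x y = \<one>\<^bsub>H\<^esub>"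
  then have "lift x \<otimes>\<^bsub>H\<^esub> lift y = lift y \<otimes>\<^bsub>H\<^esub> lift x"
    using assms by (simp add: comm_pairing_def H.commutator_eq_one_iff lift_closed)
  then show "\<exists>a\<in>carrier H. \<exists>b\<in>carrier H. \<pi> a = x \<and> \<pi> b = y \<and> a \<otimes>\<^bsub>H\<^esub> b = b \<otimes>\<^bsub>H\<^esub> a"
    using assms lift_closed \<pi>_lift by blast
qed

lemma derived_subset:
  assumes "subgroup S H" and "\<And>x y. x \<in> carrier G \<Longrightarrow> y \<in> carrier G \<Longrightarrow> comm_pairing x y \<in> S"
  shows "derived H (carrier H) \<subseteq> S"
  unfolding derived_def
proof (rule H.generate_subgroup_incl[OF _ assms(1)])
  show "derived_set H (carrier H) \<subseteq> S"
    using assms(2) by (auto simp: H.derived_set_eq_commutators commutator_eq_comm_pairing)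
qed

lemma card_le_card_kernel:
  assumes "finite (carrier H)"
  shows "card (carrier H) \<le> card (carrier G) * card (kernel H G \<pi>)"
proof -
  let ?f = "\<lambda>(x, z). lift x \<otimes>\<^bsub>H\<^esub> z"
  have "carrier H \<subseteq> ?f ` (carrier G \<times> kernel H G \<pi>)"
  proof
    fix a assume a: "a \<in> carrier H"
    let ?z = "inv\<^bsub>H\<^esub> (lift (\<pi> a)) \<otimes>\<^bsub>H\<^esub> a"
    have "(\<pi> a, ?z) \<in> carrier G \<times> kernel H G \<pi>"
      using a by (simp add: kernel_def lift_closed \<pi>_lift ext.hom_mult ext.hom_inv)
    moreover have "a = ?f (\<pi> a, ?z)"
      using a by (simp add: lift_closed H.m_assoc[symmetric])
    ultimately show "a \<in> ?f ` (carrier G \<times> kernel H G \<pi>)" by (rule rev_image_eqI)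
  qed
  moreover have "finite (carrier G)" using assms surj finite_imageI by metis
  moreover have "finite (kernel H G \<pi>)"
    using assms by (rule rev_finite_subset) (simp add: kernel_def)
  ultimately have "card (carrier H) \<le> card (?f ` (carrier G \<times> kernel H G \<pi>))"
    by (simp add: card_mono)
  also have "\<dots> \<le> card (carrier G \<times> kernel H G \<pi>)"
    by (rule card_image_le) (simp add: \<open>finite (carrier G)\<close> \<open>finite (kernel H G \<pi>)\<close>)
  finally show ?thesis by (simp add: card_cartesian_product)
qed

end

lemma stem_extension_imp_central_extension:
  assumes "stem_extension H G \<pi>" and "comm_group G"
  shows "central_extension H G \<pi>"
  using assms by (auto simp: central_extension_def stem_extension_def)

section \<open>Extensions defined by a 2-cocycle\<close>

definition cocycle_extension ::
  "('a, 'c) monoid_scheme \<Rightarrow> ('b, 'd) monoid_scheme \<Rightarrow> ('a \<Rightarrow> 'a \<Rightarrow> 'b) \<Rightarrow> ('a \<times> 'b) monoid" where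
  "cocycle_extension G A c =
     \<lparr>carrier = carrier G \<times> carrier A,
      monoid.mult = (\<lambda>(x, a) (y, b). (x \<otimes>\<^bsub>G\<^esub> y, a \<otimes>\<^bsub>A\<^esub> b \<otimes>\<^bsub>A\<^esub> c x y)),
      one = (\<one>\<^bsub>G\<^esub>, \<one>\<^bsub>A\<^esub>)\<rparr>"

locale normalized_cocycle = G: group G + A: comm_group A
  for G :: "('a, 'c) monoid_scheme" and A :: "('b, 'd) monoid_scheme" +
  fixes c :: "'a \<Rightarrow> 'a \<Rightarrow> 'b"
  assumes cocycle_closed: "x \<in> carrier G \<Longrightarrow> y \<in> carrier G \<Longrightarrow> c x y \<in> carrier A"
    and cocycle_identity: "x \<in> carrier G \<Longrightarrow> y \<in> carrier G \<Longrightarrow> z \<in> carrier G \<Longrightarrow>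
      c x y \<otimes>\<^bsub>A\<^esub> c (x \<otimes>\<^bsub>G\<^esub> y) z = c y z \<otimes>\<^bsub>A\<^esub> c x (y \<otimes>\<^bsub>G\<^esub> z)"
    and cocycle_one_left: "x \<in> carrier G \<Longrightarrow> c \<one>\<^bsub>G\<^esub> x = \<one>\<^bsub>A\<^esub>"
    and cocycle_one_right: "x \<in> carrier G \<Longrightarrow> c x \<one>\<^bsub>G\<^esub> = \<one>\<^bsub>A\<^esub>"
begin

abbreviation E where "E \<equiv> cocycle_extension G A c"

lemma carrier_E: "carrier E = carrier G \<times> carrier A"
  and mult_E: "(x, a) \<otimes>\<^bsub>E\<^esub> (y, b) = (x \<otimes>\<^bsub>G\<^esub> y, a \<otimes>\<^bsub>A\<^esub> b \<otimes>\<^bsub>A\<^esub> c x y)"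
  and one_E: "\<one>\<^bsub>E\<^esub> = (\<one>\<^bsub>G\<^esub>, \<one>\<^bsub>A\<^esub>)"
  by (simp_all add: cocycle_extension_def)

lemma group_E: "group E"
proof (rule groupI)
  fix u v w assume "u \<in> carrier E" "v \<in> carrier E" "w \<in> carrier E"
  then obtain x a y b z d where uvw: "u = (x, a)" "v = (y, b)" "w = (z, d)"
    and G: "x \<in> carrier G" "y \<in> carrier G" "z \<in> carrier G"
    and A: "a \<in> carrier A" "b \<in> carrier A" "d \<in> carrier A"
    by (auto simp: carrier_E)
  have "a \<otimes>\<^bsub>A\<^esub> b \<otimes>\<^bsub>A\<^esub> c x y \<otimes>\<^bsub>A\<^esub> d \<otimes>\<^bsub>A\<^esub> c (x \<otimes>\<^bsub>G\<^esub> y) z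
      = a \<otimes>\<^bsub>A\<^esub> b \<otimes>\<^bsub>A\<^esub> d \<otimes>\<^bsub>A\<^esub> (c x y \<otimes>\<^bsub>A\<^esub> c (x \<otimes>\<^bsub>G\<^esub> y) z)"
    using G A by (simp add: cocycle_closed A.m_ac)
  also have "\<dots> = a \<otimes>\<^bsub>A\<^esub> (b \<otimes>\<^bsub>A\<^esub> d \<otimes>\<^bsub>A\<^esub> c y z) \<otimes>\<^bsub>A\<^esub> c x (y \<otimes>\<^bsub>G\<^esub> z)"
    using G A by (simp add: cocycle_identity cocycle_closed A.m_ac)
  finally show "u \<otimes>\<^bsub>E\<^esub> v \<otimes>\<^bsub>E\<^esub> w = u \<otimes>\<^bsub>E\<^esub> (v \<otimes>\<^bsub>E\<^esub> w)"
    using G by (simp add: uvw mult_E G.m_assoc)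
next
  fix u assume "u \<in> carrier E"
  then obtain x a where u: "u = (x, a)" "x \<in> carrier G" "a \<in> carrier A"
    by (auto simp: carrier_E)
  then show "\<one>\<^bsub>E\<^esub> \<otimes>\<^bsub>E\<^esub> u = u"
    by (simp add: one_E mult_E cocycle_one_left)
  let ?v = "(inv\<^bsub>G\<^esub> x, inv\<^bsub>A\<^esub> (a \<otimes>\<^bsub>A\<^esub> c (inv\<^bsub>G\<^esub> x) x))"
  have "?v \<otimes>\<^bsub>E\<^esub> u = \<one>\<^bsub>E\<^esub>"
    using u by (simp add: one_E mult_E cocycle_closed A.m_assoc A.m_comm[of a])
  moreover have "?v \<in> carrier E" using u by (simp add: carrier_E cocycle_closed)
  ultimately show "\<exists>v\<in>carrier E. v \<otimes>\<^bsub>E\<^esub> u = \<one>\<^bsub>E\<^esub>" by blast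
qed (auto simp: carrier_E one_E cocycle_extension_def cocycle_closed)

sublocale E: group E by (rule group_E)

lemma fst_hom: "fst \<in> hom E G"
  by (auto intro!: homI simp: carrier_E mult_E)

lemma kernel_fst: "kernel E G fst = {\<one>\<^bsub>G\<^esub>} \<times> carrier A"
  by (auto simp: kernel_def carrier_E)

lemma kernel_fst_central: "kernel E G fst \<subseteq> group_center E"
proof
  fix u assume "u \<in> kernel E G fst"
  then obtain a where u: "u = (\<one>\<^bsub>G\<^esub>, a)" "a \<in> carrier A" by (auto simp: kernel_fst)
  have "u \<otimes>\<^bsub>E\<^esub> v = v \<otimes>\<^bsub>E\<^esub> u" if "v \<in> carrier E" for v
    using that u by (auto simp: carrier_E mult_E cocycle_one_left cocycle_one_right A.m_comm)
  then show "u \<in> group_center E"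
    using u by (simp add: group_center_def carrier_E)
qed

lemma embedding_hom: "(\<lambda>a. (\<one>\<^bsub>G\<^esub>, a)) \<in> hom A E"
  by (auto intro!: homI simp: carrier_E mult_E cocycle_one_left)

lemma commutator_E:
  assumes "x \<in> carrier G" "y \<in> carrier G" and "x \<otimes>\<^bsub>G\<^esub> y = y \<otimes>\<^bsub>G\<^esub> x"
  shows "commutator E (x, \<one>\<^bsub>A\<^esub>) (y, \<one>\<^bsub>A\<^esub>) = (\<one>\<^bsub>G\<^esub>, c x y \<otimes>\<^bsub>A\<^esub> inv\<^bsub>A\<^esub> (c y x))"
proof (rule E.commutator_eqI)
  show "(x, \<one>\<^bsub>A\<^esub>) \<otimes>\<^bsub>E\<^esub> (y, \<one>\<^bsub>A\<^esub>)
      = (\<one>\<^bsub>G\<^esub>, c x y \<otimes>\<^bsub>A\<^esub> inv\<^bsub>A\<^esub> (c y x)) \<otimes>\<^bsub>E\<^esub> ((y, \<one>\<^bsub>A\<^esub>) \<otimes>\<^bsub>E\<^esub> (x, \<one>\<^bsub>A\<^esub>))"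
    using assms by (simp add: mult_E cocycle_closed cocycle_one_left A.m_assoc)
qed (use assms in \<open>simp_all add: carrier_E cocycle_closed\<close>)

lemma stem_extension_E:
  assumes "comm_group G"
    and gen: "carrier A \<subseteq> generate A {c x y \<otimes>\<^bsub>A\<^esub> inv\<^bsub>A\<^esub> (c y x) | x y. x \<in> carrier G \<and> y \<in> carrier G}"
  shows "stem_extension E G fst"
proof -
  interpret Gc: comm_group G by fact
  let ?\<iota> = "\<lambda>a. (\<one>\<^bsub>G\<^esub>, a)" and ?S = "{c x y \<otimes>\<^bsub>A\<^esub> inv\<^bsub>A\<^esub> (c y x) | x y. x \<in> carrier G \<and> y \<in> carrier G}"
  interpret \<iota>: group_hom A E ?\<iota>
    by (simp add: group_hom_def group_hom_axioms_def A.group_axioms E.group_axioms embedding_hom)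
  have S: "?S \<subseteq> carrier A" using cocycle_closed by blast
  have "?\<iota> ` ?S \<subseteq> derived_set E (carrier E)"
  proof
    fix u assume "u \<in> ?\<iota> ` ?S"
    then obtain x y where "x \<in> carrier G" "y \<in> carrier G" "u = ?\<iota> (c x y \<otimes>\<^bsub>A\<^esub> inv\<^bsub>A\<^esub> (c y x))"
      by blast
    then have "u = commutator E (x, \<one>\<^bsub>A\<^esub>) (y, \<one>\<^bsub>A\<^esub>)"
      using commutator_E Gc.m_comm[of x y] by simp
    moreover have "(x, \<one>\<^bsub>A\<^esub>) \<in> carrier E" "(y, \<one>\<^bsub>A\<^esub>) \<in> carrier E"
      using \<open>x \<in> carrier G\<close> \<open>y \<in> carrier G\<close> by (simp_all add: carrier_E)
    ultimately show "u \<in> derived_set E (carrier E)"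
      unfolding E.derived_set_eq_commutators by blast
  qed
  then have "generate E (?\<iota> ` ?S) \<subseteq> derived E (carrier E)"
    unfolding derived_def by (rule E.mono_generate)
  moreover have "kernel E G fst \<subseteq> ?\<iota> ` generate A ?S"
    using gen by (auto simp: kernel_fst)
  ultimately have "kernel E G fst \<subseteq> derived E (carrier E)"
    using \<iota>.generate_img[OF S] by simp
  then show ?thesis
    using kernel_fst_central fst_hom assms(1)
    by (auto simp: stem_extension_def E.group_axioms comm_group.axioms carrier_E)
qed

end

section \<open>Finite products of cyclic groups\<close>

lemma comm_group_product_group:
  assumes "\<And>i. i \<in> I \<Longrightarrow> comm_group (G i)"
  shows "comm_group (product_group I G)"
proof (rule group.group_comm_groupI)
  show "group (product_group I G)"
    using assms by (simp add: comm_group.axioms(2))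
  fix x y assume "x \<in> carrier (product_group I G)" "y \<in> carrier (product_group I G)"
  then show "x \<otimes>\<^bsub>product_group I G\<^esub> y = y \<otimes>\<^bsub>product_group I G\<^esub> x"
    using assms by (auto simp: PiE_iff comm_monoid.m_comm[OF comm_group.axioms(1)])
qed

lemma integer_mod_product_decrement:
  fixes P :: "'a set" and m :: "'a \<Rightarrow> nat"
  defines "Z \<equiv> product_group P (\<lambda>q. integer_mod_group (m q))"
  assumes m: "\<And>q. q \<in> P \<Longrightarrow> m q \<ge> 2" and a: "a \<in> carrier Z" and q: "q \<in> P" "a q \<noteq> 0"
  shows "a(q := a q - 1) \<in> carrier Z"
    and "a = a(q := a q - 1) \<otimes>\<^bsub>Z\<^esub> (\<lambda>q'\<in>P. if q' = q then 1 else 0)"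
proof -
  have carrier_Z: "carrier Z = (\<Pi>\<^sub>E q\<in>P. {0..<int (m q)})"
    unfolding Z_def carrier_product_group
    by (rule PiE_cong) (use m in \<open>fastforce simp: carrier_integer_mod_group\<close>)
  have a_range: "\<And>q'. q' \<in> P \<Longrightarrow> 0 \<le> a q' \<and> a q' < int (m q')" and "a \<in> extensional P"
    using a by (auto simp: carrier_Z PiE_iff)
  then show "a(q := a q - 1) \<in> carrier Z"
    using q by (fastforce simp: carrier_Z PiE_iff extensional_def)
  show "a = a(q := a q - 1) \<otimes>\<^bsub>Z\<^esub> (\<lambda>q'\<in>P. if q' = q then 1 else 0)"
  proof
    fix i show "a i = (a(q := a q - 1) \<otimes>\<^bsub>Z\<^esub> (\<lambda>q'\<in>P. if q' = q then 1 else 0)) i"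
      using a_range \<open>a \<in> extensional P\<close> q m
      by (cases "i \<in> P") (auto simp: Z_def extensional_def mod_pos_pos_trivial)
  qed
qed

lemma integer_mod_product_generated_by_units:
  fixes P :: "'a set" and m :: "'a \<Rightarrow> nat"
  defines "Z \<equiv> product_group P (\<lambda>q. integer_mod_group (m q))"
  assumes "finite P" and m: "\<And>q. q \<in> P \<Longrightarrow> m q \<ge> 2"
  shows "carrier Z \<subseteq> generate Z ((\<lambda>q. \<lambda>q'\<in>P. if q' = q then 1 else 0) ` P)"
proof -
  let ?U = "(\<lambda>q. \<lambda>q'\<in>P. if q' = q then 1 else 0) ` P"
  have "a \<in> generate Z ?U" if "a \<in> carrier Z" "nat (sum a P) = N" for a N
    using that
  proof (induction N arbitrary: a rule: less_induct)
    case (less N)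
    have a_nonneg: "0 \<le> a q" if "q \<in> P" for q
    proof -
      have "a q \<in> carrier (integer_mod_group (m q))"
        using less.prems(1) that by (simp add: Z_def carrier_product_group PiE_iff)
      then show ?thesis using m[OF that] by (simp add: carrier_integer_mod_group)
    qed
    show ?case
    proof (cases "\<forall>q\<in>P. a q = 0")
      case True
      then have "a = \<one>\<^bsub>Z\<^esub>"
        using less.prems(1) by (auto simp: Z_def PiE_iff extensional_def fun_eq_iff)
      then show ?thesis by (simp add: generate.one)
    next
      case False
      then obtain q where q: "q \<in> P" "a q \<noteq> 0" by blast
      define a' where "a' = a(q := a q - 1)"
      note decrement = integer_mod_product_decrement[OF m less.prems(1)[unfolded Z_def] q,
          folded a'_def Z_def]
      have "sum a' P = sum a P - 1"
        using q \<open>finite P\<close> by (simp add: a'_def sum.remove)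
      moreover have "sum a P > 0"
        using a_nonneg q \<open>finite P\<close> by (metis (no_types, lifting) order_le_less sum_pos2)
      ultimately have "nat (sum a' P) < N" using less.prems(2) by simp
      then have "a' \<in> generate Z ?U" using less.IH decrement(1) by blast
      moreover have "(\<lambda>q'\<in>P. if q' = q then 1 else 0) \<in> generate Z ?U"
        using q by (intro generate.incl) blast
      ultimately show ?thesis using decrement(2) by (metis Z_def generate.eng)
    qed
  qed
  then show ?thesis by blast
qed

text \<open>Otherwise simp rewrites \<open>carrier G\<close> and \<open>{1..k}\<close> away, and lemmas stated in these terms
  no longer apply.\<close>
declare carrier_product_group [simp del] One_nat_def [simp del]

lemma mod_cocycle_identity:
  fixes m l :: int
  assumes "m dvd l"
  shows "(a * b mod m + (a + a') mod l * c mod m) mod m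
    = (a' * c mod m + a * ((b + c) mod m) mod m) mod m"
proof -
  have "(a + a') mod l * c mod m = (a + a') * c mod m"
    by (metis assms mod_mod_cancel mod_mult_left_eq)
  then have "(a * b mod m + (a + a') mod l * c mod m) mod m = (a * b + (a + a') * c) mod m"
    by (simp add: mod_add_eq)
  also have "\<dots> = (a' * c + a * (b + c)) mod m"
    by (simp add: algebra_simps)
  also have "\<dots> = (a' * c mod m + a * ((b + c) mod m) mod m) mod m"
    by (simp add: mod_add_eq mod_mult_right_eq)
  finally show ?thesis .
qed

locale cyclic_product =
  fixes k :: nat and n :: "nat \<Rightarrow> nat"
  assumes n_ge_2: "\<And>i. i \<in> {1..k} \<Longrightarrow> n i \<ge> 2"
    and n_dvd: "\<And>i j. 1 \<le> i \<Longrightarrow> i \<le> j \<Longrightarrow> j \<le> k \<Longrightarrow> n j dvd n i"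
begin

lemma n_gt_1 [simp]: "1 \<le> i \<Longrightarrow> i \<le> k \<Longrightarrow> 1 < n i"
  using n_ge_2[of i] by simp

lemma n_pos [simp]: "1 \<le> i \<Longrightarrow> i \<le> k \<Longrightarrow> 0 < n i"
  using n_ge_2[of i] by simp

abbreviation G where "G \<equiv> product_group {1..k} (\<lambda>i. integer_mod_group (n i))"

lemma carrier_G: "carrier G = (\<Pi>\<^sub>E i\<in>{1..k}. {0..<int (n i)})"
  unfolding carrier_product_group
  by (rule PiE_cong) (use n_ge_2 in \<open>fastforce simp: carrier_integer_mod_group\<close>)

lemma finite_carrier_G: "finite (carrier G)"
  by (simp add: carrier_G finite_PiE)

lemma comm_group_G: "comm_group G"
  by (rule comm_group_product_group) simp

definition reduce :: "(nat \<Rightarrow> int) \<Rightarrow> nat \<Rightarrow> int" where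
  "reduce u = (\<lambda>i\<in>{1..k}. u i mod int (n i))"

lemma reduce_closed: "reduce u \<in> carrier G"
  by (auto simp: carrier_G reduce_def)

lemma reduce_id: "x \<in> carrier G \<Longrightarrow> reduce x = x"
  by (auto simp: carrier_G reduce_def PiE_iff extensional_def fun_eq_iff mod_pos_pos_trivial)

lemma reduce_cong:
  "(\<And>i. i \<in> {1..k} \<Longrightarrow> int (n i) dvd u i - v i) \<Longrightarrow> reduce u = reduce v"
  by (auto simp: reduce_def fun_eq_iff mod_eq_dvd_iff)

lemma reduce_add: "reduce u \<otimes>\<^bsub>G\<^esub> reduce v = reduce (\<lambda>i. u i + v i)"
  by (auto simp: reduce_def fun_eq_iff mod_simps)

definition basis :: "nat \<Rightarrow> nat \<Rightarrow> int" where
  "basis i = (\<lambda>t\<in>{1..k}. if t = i then 1 else 0)"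

lemma reduce_dvd_diff: "i \<in> {1..k} \<Longrightarrow> int (n i) dvd u i - reduce u i"
  by (simp add: reduce_def dvd_minus_mod)

lemma carrier_dvd_imp_zero:
  "x \<in> carrier G \<Longrightarrow> i \<in> {1..k} \<Longrightarrow> int (n i) dvd x i \<Longrightarrow> x i = 0"
  by (auto simp: carrier_G PiE_iff dvd_eq_mod_eq_0 mod_pos_pos_trivial)

lemma basis_closed: "i \<in> {1..k} \<Longrightarrow> basis i \<in> carrier G"
  by (auto simp: carrier_G basis_def)

definition pairs :: "(nat \<times> nat) set" where
  "pairs = {(i, j). 1 \<le> i \<and> i < j \<and> j \<le> k}"

lemma finite_pairs: "finite pairs"
  by (rule finite_subset[of _ "{1..k} \<times> {1..k}"]) (auto simp: pairs_def)

abbreviation multiplier where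
  "multiplier \<equiv> product_group pairs (\<lambda>q. integer_mod_group (n (snd q)))"

lemma pairs_n_ge_2: "q \<in> pairs \<Longrightarrow> n (snd q) \<ge> 2"
  using n_ge_2 by (auto simp: pairs_def)

lemma carrier_multiplier: "carrier multiplier = (\<Pi>\<^sub>E q\<in>pairs. {0..<int (n (snd q))})"
  unfolding carrier_product_group
  by (rule PiE_cong) (use pairs_n_ge_2 in \<open>fastforce simp: carrier_integer_mod_group\<close>)

lemma finite_carrier_multiplier: "finite (carrier multiplier)"
  by (simp add: carrier_multiplier finite_PiE finite_pairs)

lemma comm_group_multiplier: "comm_group multiplier"
  by (rule comm_group_product_group) simp

lemma restrict_mod_closed: "(\<lambda>q\<in>pairs. f q mod int (n (snd q))) \<in> carrier multiplier"
proof -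
  have "0 < int (n (snd q))" if "q \<in> pairs" for q using pairs_n_ge_2[OF that] by simp
  then show ?thesis by (auto simp: carrier_multiplier)
qed

definition minor_cocycle :: "(nat \<Rightarrow> int) \<Rightarrow> (nat \<Rightarrow> int) \<Rightarrow> nat \<times> nat \<Rightarrow> int" where
  "minor_cocycle x y = (\<lambda>q\<in>pairs. x (fst q) * y (snd q) mod int (n (snd q)))"

definition minors :: "(nat \<Rightarrow> int) \<Rightarrow> (nat \<Rightarrow> int) \<Rightarrow> nat \<times> nat \<Rightarrow> int" where
  "minors x y =
     (\<lambda>q\<in>pairs. (x (fst q) * y (snd q) - x (snd q) * y (fst q)) mod int (n (snd q)))"

definition minors_vanish :: "(nat \<Rightarrow> int) \<Rightarrow> (nat \<Rightarrow> int) \<Rightarrow> bool" where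
  "minors_vanish x y \<longleftrightarrow>
     (\<forall>i j. 1 \<le> i \<longrightarrow> i < j \<longrightarrow> j \<le> k \<longrightarrow> int (n j) dvd x i * y j - x j * y i)"

lemma minors_closed: "minors x y \<in> carrier multiplier"
  unfolding minors_def by (rule restrict_mod_closed)

lemma minors_eq_one_iff: "minors x y = \<one>\<^bsub>multiplier\<^esub> \<longleftrightarrow> minors_vanish x y"
  by (auto simp: minors_def minors_vanish_def pairs_def fun_eq_iff dvd_eq_mod_eq_0)

lemma minors_vanishD:
  "minors_vanish x y \<Longrightarrow> 1 \<le> i \<Longrightarrow> i < j \<Longrightarrow> j \<le> k \<Longrightarrow> int (n j) dvd x i * y j - x j * y i"
  by (simp add: minors_vanish_def)

lemma minors_vanish_refl: "minors_vanish x x"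
  by (simp add: minors_vanish_def)

lemma minors_vanish_sym: "minors_vanish x y \<Longrightarrow> minors_vanish y x"
  unfolding minors_vanish_def by (metis dvd_minus_iff minus_diff_eq mult.commute)

lemma minors_vanish_reduce_smult: "minors_vanish x (reduce (\<lambda>i. c * x i))"
  unfolding minors_vanish_def
proof (intro allI impI)
  fix i j assume ij: "1 \<le> i" "i < j" "j \<le> k"
  obtain d where d: "n i = n j * d" using n_dvd[of i j] ij by auto
  have "x i * reduce (\<lambda>i. c * x i) j - x j * reduce (\<lambda>i. c * x i) i
      = int (n j) * (x j * (c * x i div int (n i)) * int d - x i * (c * x j div int (n j)))"
    using ij by (simp add: reduce_def minus_div_mult_eq_mod[symmetric] d algebra_simps)
  then show "int (n j) dvd x i * reduce (\<lambda>i. c * x i) j - x j * reduce (\<lambda>i. c * x i) i"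
    by simp
qed

lemma minors_vanish_first_axis_iff:
  "minors_vanish x (\<lambda>t\<in>{1..k}. if t = 1 then c else 0)
    \<longleftrightarrow> (\<forall>j. 2 \<le> j \<longrightarrow> j \<le> k \<longrightarrow> int (n j) dvd c * x j)"
  unfolding minors_vanish_def
  by (auto simp: mult.commute)

lemma not_minors_vanish_basis:
  assumes "k \<ge> 2"
  shows "\<not> minors_vanish (basis 1) (basis 2)"
proof
  assume "minors_vanish (basis 1) (basis 2)"
  then have "int (n 2) dvd basis 1 1 * basis 2 2 - basis 1 2 * basis 2 1"
    using assms by (intro minors_vanishD) auto
  then have "int (n 2) dvd 1" using assms by (simp add: basis_def)
  then show False using n_ge_2[of 2] assms by simp
qed

lemma minors_eq_cocycle_quotient:
  "minors x y = minor_cocycle x y \<otimes>\<^bsub>multiplier\<^esub> inv\<^bsub>multiplier\<^esub> (minor_cocycle y x)"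
proof -
  have "inv\<^bsub>multiplier\<^esub> (minor_cocycle y x) = (\<lambda>q\<in>pairs. (- (y (fst q) * x (snd q))) mod int (n (snd q)))"
    using restrict_mod_closed pairs_n_ge_2
    by (auto simp: minor_cocycle_def inv_product_group fun_eq_iff carrier_integer_mod_group mod_simps)
  then show ?thesis by (auto simp: minors_def minor_cocycle_def fun_eq_iff mod_simps mult.commute)
qed

lemma minors_basis:
  assumes "(i, j) \<in> pairs"
  shows "minors (basis i) (basis j) = (\<lambda>q\<in>pairs. if q = (i, j) then 1 else 0)"
  using assms pairs_n_ge_2[OF assms] by (auto simp: minors_def basis_def pairs_def fun_eq_iff)

lemma normalized_cocycle_minor_cocycle:
  "normalized_cocycle G multiplier minor_cocycle"
proof (intro normalized_cocycle.intro normalized_cocycle_axioms.intro)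
  show "group G" "comm_group multiplier"
    using comm_group_G comm_group_multiplier by (simp_all add: comm_group.axioms(2))
  show "minor_cocycle x y \<in> carrier multiplier" for x y
    unfolding minor_cocycle_def by (rule restrict_mod_closed)
next
  fix x y z assume "x \<in> carrier G" "y \<in> carrier G" "z \<in> carrier G"
  show "minor_cocycle x y \<otimes>\<^bsub>multiplier\<^esub> minor_cocycle (x \<otimes>\<^bsub>G\<^esub> y) z
      = minor_cocycle y z \<otimes>\<^bsub>multiplier\<^esub> minor_cocycle x (y \<otimes>\<^bsub>G\<^esub> z)"
    unfolding mult_product_group[of pairs]
  proof (rule restrict_ext)
    fix q assume q: "q \<in> pairs"
    then obtain i j where ij: "q = (i, j)" "i \<in> {1..k}" "j \<in> {1..k}" "n j dvd n i"
      using n_dvd by (auto simp: pairs_def)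
    then show "minor_cocycle x y q \<otimes>\<^bsub>integer_mod_group (n (snd q))\<^esub> minor_cocycle (x \<otimes>\<^bsub>G\<^esub> y) z q
      = minor_cocycle y z q \<otimes>\<^bsub>integer_mod_group (n (snd q))\<^esub> minor_cocycle x (y \<otimes>\<^bsub>G\<^esub> z) q"
      using q mod_cocycle_identity[of "int (n j)" "int (n i)"] by (simp add: minor_cocycle_def)
  qed
qed (auto simp: minor_cocycle_def pairs_def)

lemma stem_extension_minor_cocycle:
  "stem_extension (cocycle_extension G multiplier minor_cocycle) G fst"
proof (rule normalized_cocycle.stem_extension_E[OF normalized_cocycle_minor_cocycle comm_group_G])
  let ?S = "{minor_cocycle x y \<otimes>\<^bsub>multiplier\<^esub> inv\<^bsub>multiplier\<^esub> (minor_cocycle y x)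
      | x y. x \<in> carrier G \<and> y \<in> carrier G}"
  have "(\<lambda>q. \<lambda>q'\<in>pairs. if q' = q then 1 else 0) ` pairs \<subseteq> ?S"
  proof
    fix u :: "nat \<times> nat \<Rightarrow> int"
    assume "u \<in> (\<lambda>q. \<lambda>q'\<in>pairs. if q' = q then 1 else 0) ` pairs"
    then obtain i j where ij: "(i, j) \<in> pairs" "u = (\<lambda>q'\<in>pairs. if q' = (i, j) then 1 else 0)"
      by auto
    then have "u = minors (basis i) (basis j)" "i \<in> {1..k}" "j \<in> {1..k}"
      by (auto simp: minors_basis pairs_def)
    then show "u \<in> ?S" using basis_closed by (auto simp: minors_eq_cocycle_quotient)
  qed
  then have "generate multiplier ((\<lambda>q. \<lambda>q'\<in>pairs. if q' = q then 1 else 0) ` pairs)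
      \<subseteq> generate multiplier ?S"
    by (rule group.mono_generate[OF comm_group.axioms(2)[OF comm_group_multiplier]])
  moreover have "carrier multiplier
      \<subseteq> generate multiplier ((\<lambda>q. \<lambda>q'\<in>pairs. if q' = q then 1 else 0) ` pairs)"
    using finite_pairs pairs_n_ge_2 by (rule integer_mod_product_generated_by_units)
  ultimately show "carrier multiplier \<subseteq> generate multiplier ?S" by (rule order_trans[rotated])
qed

lemma schur_cover_card_ge_multiplier:
  assumes "schur_cover H G \<pi>"
  shows "card (carrier G) * card (carrier multiplier) \<le> card (carrier H)"
proof -
  have "finite (carrier (cocycle_extension G multiplier minor_cocycle))"
    by (simp add: cocycle_extension_def finite_carrier_G finite_carrier_multiplier)
  with assms stem_extension_minor_cocycle
  have "card (carrier (cocycle_extension G multiplier minor_cocycle)) \<le> card (carrier H)"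
    by (rule schur_cover_card_ge)
  then show ?thesis by (simp add: cocycle_extension_def card_cartesian_product)
qed

definition minor_graph :: "(nat \<Rightarrow> int) \<Rightarrow> (nat \<Rightarrow> int) \<Rightarrow> bool" where
  "minor_graph x y \<longleftrightarrow> x \<in> carrier G \<and> y \<in> carrier G \<and> x \<noteq> y \<and> minors_vanish x y"

lemma minor_graph_sym: "minor_graph x y \<Longrightarrow> minor_graph y x"
  by (auto simp: minor_graph_def minors_vanish_sym)

lemma reduced_minor_graph_iff:
  "v \<in> reduced_vertices (carrier G) minor_graph \<longleftrightarrow> v \<in> carrier G \<and> (\<exists>w\<in>carrier G. \<not> minors_vanish v w)"
  unfolding reduced_vertices_def dominant_def minor_graph_def using minors_vanish_refl by auto metis

end

section \<open>The commutator map of a central extension of a cyclic product\<close>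

primrec ordered_prod :: "('a, 'b) monoid_scheme \<Rightarrow> (nat \<Rightarrow> 'a) \<Rightarrow> nat \<Rightarrow> 'a" where
  "ordered_prod M f 0 = \<one>\<^bsub>M\<^esub>"
| "ordered_prod M f (Suc t) = ordered_prod M f t \<otimes>\<^bsub>M\<^esub> f (Suc t)"

lemma ordered_prod_cong:
  "(\<And>j. 1 \<le> j \<Longrightarrow> j \<le> t \<Longrightarrow> f j = g j) \<Longrightarrow> ordered_prod M f t = ordered_prod M g t"
  by (induction t) (auto simp: One_nat_def)

lemma (in group) ordered_prod_in_subgroup:
  "subgroup S G \<Longrightarrow> (\<And>j. f j \<in> S) \<Longrightarrow> ordered_prod G f t \<in> S"
  by (induction t) (simp_all add: subgroup.one_closed subgroup.m_closed)

context central_extension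
begin

lemma ordered_prod_mult:
  assumes f: "\<And>j. f j \<in> kernel H G \<pi>" and g: "\<And>j. g j \<in> kernel H G \<pi>"
  shows "ordered_prod H f t \<otimes>\<^bsub>H\<^esub> ordered_prod H g t = ordered_prod H (\<lambda>j. f j \<otimes>\<^bsub>H\<^esub> g j) t"
proof (induction t)
  case (Suc t)
  have kernel_prod: "ordered_prod H h t \<in> kernel H G \<pi>" if "\<And>j. h j \<in> kernel H G \<pi>" for h
    using that by (rule H.ordered_prod_in_subgroup[OF ext.subgroup_kernel])
  have c: "ordered_prod H f t \<in> carrier H" "ordered_prod H g t \<in> carrier H"
    "f (Suc t) \<in> carrier H" "g (Suc t) \<in> carrier H"
    using f g kernel_prod by (auto simp: kernel_def)
  have "ordered_prod H f (Suc t) \<otimes>\<^bsub>H\<^esub> ordered_prod H g (Suc t)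
      = ordered_prod H f t \<otimes>\<^bsub>H\<^esub> (f (Suc t) \<otimes>\<^bsub>H\<^esub> ordered_prod H g t) \<otimes>\<^bsub>H\<^esub> g (Suc t)"
    using c by (simp add: H.m_assoc)
  also have "\<dots> = ordered_prod H f t \<otimes>\<^bsub>H\<^esub> ordered_prod H g t \<otimes>\<^bsub>H\<^esub> (f (Suc t) \<otimes>\<^bsub>H\<^esub> g (Suc t))"
    using c kernel_commute[OF f c(2)] by (simp add: H.m_assoc)
  finally show ?case by (simp add: Suc)
qed simp

end

locale cyclic_product_extension = cyclic_product k n +
  central_extension H "product_group {1..k} (\<lambda>i. integer_mod_group (n i))" \<pi>
  for k n and H :: "('a, 'c) monoid_scheme" and \<pi>
begin

definition int_pairing :: "(nat \<Rightarrow> int) \<Rightarrow> (nat \<Rightarrow> int) \<Rightarrow> 'a" where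
  "int_pairing u v = comm_pairing (reduce u) (reduce v)"

lemma int_pairing_in_kernel: "int_pairing u v \<in> kernel H G \<pi>"
  by (simp add: int_pairing_def comm_pairing_in_kernel reduce_closed)

lemma int_pairing_closed: "int_pairing u v \<in> carrier H"
  by (simp add: int_pairing_def comm_pairing_closed reduce_closed)

lemma int_pairing_add_left: "int_pairing (\<lambda>i. u i + u' i) v = int_pairing u v \<otimes>\<^bsub>H\<^esub> int_pairing u' v"
  unfolding int_pairing_def reduce_add[symmetric] by (rule comm_pairing_mult_left) (rule reduce_closed)+

lemma int_pairing_add_right: "int_pairing u (\<lambda>i. v i + v' i) = int_pairing u v \<otimes>\<^bsub>H\<^esub> int_pairing u v'"
  unfolding int_pairing_def reduce_add[symmetric] by (rule comm_pairing_mult_right) (rule reduce_closed)+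

lemma int_pairing_smult_left: "int_pairing (\<lambda>i. c * u i) v = int_pairing u v [^]\<^bsub>H\<^esub> c"
  using H.additive_int_smult[of "\<lambda>u. int_pairing u v"] int_pairing_closed int_pairing_add_left
  by blast

lemma int_pairing_smult_right: "int_pairing u (\<lambda>i. c * v i) = int_pairing u v [^]\<^bsub>H\<^esub> c"
  using H.additive_int_smult[of "int_pairing u"] int_pairing_closed int_pairing_add_right
  by blast

lemma int_pairing_smult: "int_pairing (\<lambda>i. c * u i) v = int_pairing u (\<lambda>i. c * v i)"
  by (simp add: int_pairing_smult_left int_pairing_smult_right)

lemma int_pairing_zero_left: "int_pairing (\<lambda>i. 0) v = \<one>\<^bsub>H\<^esub>"
  using int_pairing_smult_left[of 0] by simp

lemma int_pairing_zero_right: "int_pairing u (\<lambda>i. 0) = \<one>\<^bsub>H\<^esub>"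
  using int_pairing_smult_right[of _ 0] by simp

lemma int_pairing_neg_left: "int_pairing (\<lambda>i. - u i) v = inv\<^bsub>H\<^esub> (int_pairing u v)"
  using int_pairing_smult_left[of "-1"] int_pairing_closed by (simp add: H.int_pow_neg)

lemma int_pairing_swap: "int_pairing u v = inv\<^bsub>H\<^esub> (int_pairing v u)"
  unfolding int_pairing_def by (rule comm_pairing_swap) (rule reduce_closed)+

lemma int_pairing_self_smult: "int_pairing u (\<lambda>i. c * u i) = \<one>\<^bsub>H\<^esub>"
  by (simp add: int_pairing_smult_right int_pairing_def comm_pairing_self reduce_closed)

lemma int_pairing_cong:
  "(\<And>i. i \<in> {1..k} \<Longrightarrow> u i = u' i) \<Longrightarrow> (\<And>i. i \<in> {1..k} \<Longrightarrow> v i = v' i) \<Longrightarrow>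
    int_pairing u v = int_pairing u' v'"
  unfolding int_pairing_def using reduce_cong[of u u'] reduce_cong[of v v'] by simp

definition unit_vec :: "nat \<Rightarrow> nat \<Rightarrow> int" where
  "unit_vec j = (\<lambda>i. if i = j then 1 else 0)"

text \<open>Since \<open>n j \<cdot> e\<^sub>j\<close> reduces to 0, only the residues of the first argument modulo n j matter.\<close>
lemma int_pairing_unit_vec_cong:
  assumes "j \<in> {1..k}" and "\<And>i. i \<in> {1..k} \<Longrightarrow> int (n j) dvd u i - u' i"
  shows "int_pairing u (unit_vec j) = int_pairing u' (unit_vec j)"
proof -
  define w where "w i = (u i - u' i) div int (n j)" for i
  have "int_pairing (\<lambda>i. u i - u' i) (unit_vec j) = int_pairing (\<lambda>i. int (n j) * w i) (unit_vec j)"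
    using assms(2) by (intro int_pairing_cong) (simp_all add: w_def)
  also have "\<dots> = int_pairing w (\<lambda>i. int (n j) * unit_vec j i)"
    by (rule int_pairing_smult)
  also have "\<dots> = int_pairing w (\<lambda>i. 0)"
    unfolding int_pairing_def using assms(1) by (intro arg_cong[where f = "comm_pairing _"] reduce_cong)
      (simp add: unit_vec_def)
  finally have "int_pairing (\<lambda>i. u i - u' i) (unit_vec j) = \<one>\<^bsub>H\<^esub>"
    by (simp add: int_pairing_zero_right)
  then show ?thesis
    using int_pairing_add_left[of u' "\<lambda>i. u i - u' i" "unit_vec j"] int_pairing_closed by simp
qed

definition truncate :: "nat \<Rightarrow> (nat \<Rightarrow> int) \<Rightarrow> nat \<Rightarrow> int" where
  "truncate t x = (\<lambda>i. if i \<le> t then x i else 0)"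

definition minor_column :: "(nat \<Rightarrow> int) \<Rightarrow> (nat \<Rightarrow> int) \<Rightarrow> nat \<Rightarrow> nat \<Rightarrow> int" where
  "minor_column x y j = (\<lambda>i. if i < j then x i * y j - x j * y i else 0)"

text \<open>The self-pairing of \<open>e\<^sub>j\<close> vanishes, so bilinearity leaves a single new factor.\<close>
lemma int_pairing_add_unit_vec:
  "int_pairing (\<lambda>i. a i + s * unit_vec j i) (\<lambda>i. b i + t * unit_vec j i)
    = int_pairing a b \<otimes>\<^bsub>H\<^esub> int_pairing (\<lambda>i. t * a i - s * b i) (unit_vec j)"
proof -
  let ?e = "unit_vec j"
  have ee: "int_pairing (\<lambda>i. s * ?e i) (\<lambda>i. t * ?e i) = \<one>\<^bsub>H\<^esub>"
  proof -
    have "int_pairing (\<lambda>i. s * ?e i) (\<lambda>i. t * ?e i) = int_pairing ?e (\<lambda>i. s * (t * ?e i))"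
      by (rule int_pairing_smult)
    then show ?thesis using int_pairing_self_smult[of ?e "s * t"] by (simp add: mult.assoc)
  qed
  have ae: "int_pairing a (\<lambda>i. t * ?e i) = int_pairing (\<lambda>i. t * a i) ?e"
    by (rule int_pairing_smult[symmetric])
  have eb: "int_pairing (\<lambda>i. s * ?e i) b = int_pairing (\<lambda>i. - (s * b i)) ?e"
  proof -
    have "int_pairing (\<lambda>i. s * ?e i) b = int_pairing ?e (\<lambda>i. s * b i)"
      by (rule int_pairing_smult)
    also have "\<dots> = inv\<^bsub>H\<^esub> (int_pairing (\<lambda>i. s * b i) ?e)"
      by (rule int_pairing_swap)
    finally show ?thesis by (simp only: int_pairing_neg_left)
  qed
  have "int_pairing (\<lambda>i. a i + s * ?e i) (\<lambda>i. b i + t * ?e i)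
      = int_pairing a b \<otimes>\<^bsub>H\<^esub> int_pairing a (\<lambda>i. t * ?e i)
        \<otimes>\<^bsub>H\<^esub> (int_pairing (\<lambda>i. s * ?e i) b \<otimes>\<^bsub>H\<^esub> int_pairing (\<lambda>i. s * ?e i) (\<lambda>i. t * ?e i))"
    by (simp only: int_pairing_add_left int_pairing_add_right)
  also have "\<dots> = int_pairing a b \<otimes>\<^bsub>H\<^esub> (int_pairing a (\<lambda>i. t * ?e i) \<otimes>\<^bsub>H\<^esub> int_pairing (\<lambda>i. s * ?e i) b)"
    by (simp add: ee int_pairing_closed H.m_assoc)
  also have "\<dots> = int_pairing a b \<otimes>\<^bsub>H\<^esub> int_pairing (\<lambda>i. t * a i + - (s * b i)) ?e"
    by (simp only: ae eb int_pairing_add_left)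
  finally show ?thesis by simp
qed

lemma int_pairing_truncate:
  "int_pairing (truncate t x) (truncate t y)
    = ordered_prod H (\<lambda>j. int_pairing (minor_column x y j) (unit_vec j)) t"
proof (induction t)
  case 0
  have "int_pairing (truncate 0 x) (truncate 0 y) = int_pairing (\<lambda>i. 0) (truncate 0 y)"
    by (rule int_pairing_cong) (auto simp: truncate_def)
  then show ?case by (simp add: int_pairing_zero_left)
next
  case (Suc t)
  have "truncate (Suc t) z = (\<lambda>i. truncate t z i + z (Suc t) * unit_vec (Suc t) i)" for z
    by (auto simp: truncate_def unit_vec_def fun_eq_iff le_Suc_eq)
  moreover have "(\<lambda>i. y (Suc t) * truncate t x i - x (Suc t) * truncate t y i)
      = minor_column x y (Suc t)"
    by (auto simp: minor_column_def truncate_def fun_eq_iff)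
  ultimately show ?case by (simp add: int_pairing_add_unit_vec Suc)
qed

definition pair_column :: "(nat \<times> nat \<Rightarrow> int) \<Rightarrow> nat \<Rightarrow> nat \<Rightarrow> int" where
  "pair_column m j = (\<lambda>i. if i < j then m (i, j) else 0)"

definition commutator_map :: "(nat \<times> nat \<Rightarrow> int) \<Rightarrow> 'a" where
  "commutator_map m = ordered_prod H (\<lambda>j. int_pairing (pair_column m j) (unit_vec j)) k"

lemma comm_pairing_eq_commutator_map:
  assumes "x \<in> carrier G" "y \<in> carrier G"
  shows "comm_pairing x y = commutator_map (minors x y)"
proof -
  have "reduce (truncate k z) = z" if "z \<in> carrier G" for z
    using reduce_cong[of "truncate k z" z] reduce_id[OF that] by (simp add: truncate_def)
  then have "comm_pairing x y = int_pairing (truncate k x) (truncate k y)"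
    using assms by (simp add: int_pairing_def)
  also have "\<dots> = ordered_prod H (\<lambda>j. int_pairing (minor_column x y j) (unit_vec j)) k"
    by (rule int_pairing_truncate)
  also have "\<dots> = commutator_map (minors x y)"
    unfolding commutator_map_def
  proof (rule ordered_prod_cong, rule int_pairing_unit_vec_cong)
    fix i j assume "1 \<le> j" "j \<le> k" "i \<in> {1..k}"
    then show "int (n j) dvd minor_column x y j i - pair_column (minors x y) j i"
      by (auto simp: minor_column_def pair_column_def minors_def pairs_def mod_eq_dvd_iff[symmetric])
  qed simp
  finally show ?thesis .
qed

lemma commutator_map_hom: "commutator_map \<in> hom multiplier H"
proof (rule homI)
  show "commutator_map m \<in> carrier H" for m
    unfolding commutator_map_def
    by (rule H.ordered_prod_in_subgroup[OF H.subgroup_self]) (rule int_pairing_closed)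
next
  fix m m' assume "m \<in> carrier multiplier" "m' \<in> carrier multiplier"
  have "commutator_map m \<otimes>\<^bsub>H\<^esub> commutator_map m'
      = ordered_prod H (\<lambda>j. int_pairing (pair_column m j) (unit_vec j)
          \<otimes>\<^bsub>H\<^esub> int_pairing (pair_column m' j) (unit_vec j)) k"
    unfolding commutator_map_def by (rule ordered_prod_mult) (rule int_pairing_in_kernel)+
  also have "\<dots> = commutator_map (m \<otimes>\<^bsub>multiplier\<^esub> m')"
    unfolding commutator_map_def int_pairing_add_left[symmetric]
  proof (rule ordered_prod_cong, rule int_pairing_unit_vec_cong)
    fix i j assume "1 \<le> j" "j \<le> k" "i \<in> {1..k}"
    then show "int (n j) dvd pair_column m j i + pair_column m' j i
        - pair_column (m \<otimes>\<^bsub>multiplier\<^esub> m') j i"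
      by (auto simp: pair_column_def pairs_def mod_eq_dvd_iff[symmetric])
  qed simp
  finally show "commutator_map (m \<otimes>\<^bsub>multiplier\<^esub> m') = commutator_map m \<otimes>\<^bsub>H\<^esub> commutator_map m'" ..
qed

lemma group_hom_commutator_map: "group_hom multiplier H commutator_map"
  using commutator_map_hom comm_group_multiplier
  by (simp add: group_hom_def group_hom_axioms_def comm_group.axioms(2) H.group_axioms)

lemma derived_subset_commutator_map_image:
  "derived H (carrier H) \<subseteq> commutator_map ` carrier multiplier"
proof (rule derived_subset)
  interpret \<Phi>: group_hom multiplier H commutator_map by (rule group_hom_commutator_map)
  show "subgroup (commutator_map ` carrier multiplier) H"
    by (rule \<Phi>.img_is_subgroup)
  show "comm_pairing x y \<in> commutator_map ` carrier multiplier"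
    if "x \<in> carrier G" "y \<in> carrier G" for x y
    using that minors_closed by (simp add: comm_pairing_eq_commutator_map)
qed

text \<open>A stem extension of G is at most |G| |M| large, so one of maximal size makes
  the commutator map injective.\<close>
lemma inj_on_commutator_map:
  assumes "finite (carrier H)" and "kernel H G \<pi> \<subseteq> derived H (carrier H)"
    and "card (carrier G) * card (carrier multiplier) \<le> card (carrier H)"
  shows "inj_on commutator_map (carrier multiplier)"
proof (rule eq_card_imp_inj_on[OF finite_carrier_multiplier])
  have "card (carrier H) \<le> card (carrier G) * card (kernel H G \<pi>)"
    using assms(1) by (rule card_le_card_kernel)
  also have "\<dots> \<le> card (carrier G) * card (commutator_map ` carrier multiplier)"
    using assms(2) derived_subset_commutator_map_image finite_carrier_multiplier
    by (intro mult_le_mono2 card_mono) auto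
  finally have "card (carrier G) * card (carrier multiplier)
      \<le> card (carrier G) * card (commutator_map ` carrier multiplier)"
    using assms(3) by (rule order_trans[rotated])
  moreover have "0 < card (carrier G)"
    using finite_carrier_G G.one_closed card_gt_0_iff by blast
  ultimately have "card (carrier multiplier) \<le> card (commutator_map ` carrier multiplier)"
    by simp
  then show "card (commutator_map ` carrier multiplier) = card (carrier multiplier)"
    using card_image_le[OF finite_carrier_multiplier, of commutator_map] by linarith
qed

lemma commuting_preimages_iff_minors_vanish:
  assumes "finite (carrier H)" and "kernel H G \<pi> \<subseteq> derived H (carrier H)"
    and "card (carrier G) * card (carrier multiplier) \<le> card (carrier H)"
    and "x \<in> carrier G" "y \<in> carrier G"
  shows "(\<exists>a\<in>carrier H. \<exists>b\<in>carrier H. \<pi> a = x \<and> \<pi> b = y \<and> a \<otimes>\<^bsub>H\<^esub> b = b \<otimes>\<^bsub>H\<^esub> a)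
    \<longleftrightarrow> minors_vanish x y"
proof -
  interpret \<Phi>: group_hom multiplier H commutator_map by (rule group_hom_commutator_map)
  have inj: "inj_on commutator_map (carrier multiplier)"
    using assms(1-3) by (rule inj_on_commutator_map)
  have "comm_pairing x y = \<one>\<^bsub>H\<^esub> \<longleftrightarrow> commutator_map (minors x y) = commutator_map \<one>\<^bsub>multiplier\<^esub>"
    using assms(4,5) by (simp only: comm_pairing_eq_commutator_map \<Phi>.hom_one)
  also have "\<dots> \<longleftrightarrow> minors x y = \<one>\<^bsub>multiplier\<^esub>"
    using inj minors_closed \<Phi>.G.one_closed by (rule inj_on_eq_iff)
  finally show ?thesis
    by (simp only: commuting_preimages_iff[OF assms(4,5)] minors_eq_one_iff)
qed

end

lemma (in cyclic_product) deep_adj_eq_minor_graph: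
  assumes "schur_cover H G \<pi>"
  shows "deep_adj H G \<pi> = minor_graph"
proof (intro ext)
  fix x y
  have stem: "stem_extension H G \<pi>" and fin: "finite (carrier H)"
    using assms by (simp_all add: schur_cover_def)
  then interpret cyclic_product_extension k n H \<pi>
    using comm_group_G stem_extension_imp_central_extension
    by (simp add: cyclic_product_extension_def cyclic_product_axioms)
  have "kernel H G \<pi> \<subseteq> derived H (carrier H)"
    using stem by (simp add: stem_extension_def)
  note commute_iff =
    commuting_preimages_iff_minors_vanish[OF fin this schur_cover_card_ge_multiplier[OF assms]]
  show "deep_adj H G \<pi> x y = minor_graph x y"
    unfolding deep_adj_def minor_graph_def using commute_iff[of x y] by blast
qed

section \<open>The reduced deep commuting graph of an abelian p-group\<close>

lemma connected_via_hub:
  assumes sym: "\<And>a b. E a b \<Longrightarrow> E b a" and "s \<in> W"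
    and hub: "\<And>w. w \<in> W \<Longrightarrow> (w, s) \<in> {(a, b). a \<in> W \<and> b \<in> W \<and> E a b}\<^sup>*"
  shows "\<not> induced_disconnected W E"
proof -
  let ?R = "{(a, b). a \<in> W \<and> b \<in> W \<and> E a b}"
  have "sym (?R\<^sup>*)" by (rule sym_rtrancl) (auto simp: sym_def sym)
  then have "(u, w) \<in> ?R\<^sup>*" if "u \<in> W" "w \<in> W" for u w
    using hub[OF that(1)] hub[OF that(2)] by (meson rtrancl_trans symD)
  then show ?thesis by (simp add: induced_disconnected_def)
qed

locale p_power_product =
  fixes p k :: nat and r :: "nat \<Rightarrow> nat"
  assumes prime_p: "Factorial_Ring.prime p" and k_ge_2: "k \<ge> 2"
    and r_pos: "\<forall>i \<in> {1..k}. r i \<ge> 1"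
    and r_antimono: "\<forall>i j. 1 \<le> i \<longrightarrow> i \<le> j \<longrightarrow> j \<le> k \<longrightarrow> r j \<le> r i"
begin

lemma p_ge_2: "p \<ge> 2"
  using prime_p by (simp add: prime_ge_2_nat)

sublocale cyclic_product k "\<lambda>i. p ^ r i"
proof
  fix i assume "i \<in> {1..k}"
  then have "p ^ 1 \<le> p ^ r i" using r_pos p_ge_2 by (intro power_increasing) auto
  then show "p ^ r i \<ge> 2" using p_ge_2 by simp
next
  fix i j assume "1 \<le> i" "i \<le> j" "j \<le> k"
  then show "p ^ r j dvd p ^ r i" using r_antimono by (simp add: le_imp_power_dvd)
qed

abbreviation W where "W \<equiv> reduced_vertices (carrier G) minor_graph"
abbreviation R where "R \<equiv> {(a, b). a \<in> W \<and> b \<in> W \<and> minor_graph a b}"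

lemma edge_rtrancl: "a \<in> W \<Longrightarrow> b \<in> W \<Longrightarrow> minors_vanish a b \<Longrightarrow> (a, b) \<in> R\<^sup>*"
  by (cases "a = b") (auto simp: minor_graph_def reduced_vertices_def)

lemma basis_reduced: "basis 1 \<in> W" "basis 2 \<in> W"
proof -
  have "basis 1 \<in> carrier G" "basis 2 \<in> carrier G" using basis_closed k_ge_2 by auto
  with not_minors_vanish_basis[OF k_ge_2] show "basis 1 \<in> W" "basis 2 \<in> W"
    unfolding reduced_minor_graph_iff by (blast intro: minors_vanish_sym)+
qed

context
  assumes r2: "r 2 = 1"
begin

lemma r_eq_1: "2 \<le> j \<Longrightarrow> j \<le> k \<Longrightarrow> r j = 1"
  using r_antimono r_pos r2 by (metis atLeastAtMost_iff le_antisym one_le_numeral order_trans)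

lemma reduced_first_coordinate:
  assumes "y \<in> W" and tail: "\<And>j. 2 \<le> j \<Longrightarrow> j \<le> k \<Longrightarrow> int p dvd y j"
  shows "\<not> int p dvd y 1"
proof
  assume "int p dvd y 1"
  then have "int p dvd y i" if "1 \<le> i" "i \<le> k" for i
    using tail that by (cases "i = 1") auto
  then have "minors_vanish y v" for v
    unfolding minors_vanish_def using r_eq_1 by auto
  then show False using \<open>y \<in> W\<close> by (auto simp: reduced_minor_graph_iff)
qed

lemma tail_divisible_along_paths:
  assumes "(basis 1, z) \<in> R\<^sup>*"
  shows "\<forall>j. 2 \<le> j \<longrightarrow> j \<le> k \<longrightarrow> int p dvd z j"
  using assms
proof (induction rule: rtrancl_induct)
  case base
  show ?case by (auto simp: basis_def)
next
  case (step y z)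
  then have "y \<in> W" "minors_vanish y z" by (auto simp: minor_graph_def)
  have "\<not> int p dvd y 1"
    using reduced_first_coordinate \<open>y \<in> W\<close> step.IH by blast
  show ?case
  proof (intro allI impI)
    fix j assume j: "2 \<le> j" "j \<le> k"
    then have "int p dvd y 1 * z j - y j * z 1"
      using \<open>minors_vanish y z\<close> r_eq_1 by (auto simp: minors_vanish_def)
    moreover have "int p dvd y j * z 1" using step.IH j by simp
    ultimately have "int p dvd y 1 * z j" by (metis dvd_add_left_iff diff_add_cancel)
    then show "int p dvd z j"
      using \<open>\<not> int p dvd y 1\<close> prime_p by (simp add: prime_dvd_mult_iff)
  qed
qed

lemma disconnected_if_r2_eq_1: "induced_disconnected W minor_graph"
proof -
  have "\<not> int p dvd basis 2 2" using p_ge_2 k_ge_2 by (simp add: basis_def)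
  then have "(basis 1, basis 2) \<notin> R\<^sup>*" using tail_divisible_along_paths k_ge_2 by blast
  then show ?thesis using basis_reduced by (auto simp: induced_disconnected_def)
qed

end

context
  assumes r2: "r 2 \<ge> 2"
begin

definition hub :: "nat \<Rightarrow> int" where
  "hub = (\<lambda>t\<in>{1..k}. if t = 1 then int p ^ (r 2 - 1) else 0)"

lemma hub_reduced: "hub \<in> W"
proof -
  have "r 2 \<le> r 1" using r_antimono k_ge_2 by auto
  then have "int p ^ (r 2 - 1) < int p ^ r 1"
    using p_ge_2 r2 by (intro power_strict_increasing) auto
  then have "hub \<in> carrier G" using p_ge_2 by (auto simp: hub_def carrier_G)
  moreover have "\<not> minors_vanish hub (basis 2)"
  proof
    assume "minors_vanish hub (basis 2)"
    then have "int (p ^ r 2) dvd hub 1 * basis 2 2 - hub 2 * basis 2 1"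
      using k_ge_2 by (intro minors_vanishD) auto
    then have "int p ^ r 2 dvd int p ^ (r 2 - 1)"
      using k_ge_2 by (simp add: hub_def basis_def)
    moreover have "int p ^ (r 2 - 1) < int p ^ r 2"
      using p_ge_2 r2 by (intro power_strict_increasing) auto
    ultimately show False using p_ge_2 by (simp add: zdvd_imp_le leD)
  qed
  ultimately show ?thesis using basis_closed k_ge_2 by (auto simp: reduced_minor_graph_iff)
qed

lemma minors_vanish_hub_iff:
  "minors_vanish x hub \<longleftrightarrow> (\<forall>j. 2 \<le> j \<longrightarrow> j \<le> k \<longrightarrow> int p ^ r j dvd int p ^ (r 2 - 1) * x j)"
  unfolding hub_def using minors_vanish_first_axis_iff by simp

lemma hub_if_multiple_dominant:
  assumes "\<forall>w\<in>carrier G. minors_vanish (reduce (\<lambda>i. int p * x i)) w"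
  shows "minors_vanish x hub"
  unfolding minors_vanish_hub_iff
proof (intro allI impI)
  fix j assume j: "2 \<le> j" "j \<le> k"
  let ?y = "reduce (\<lambda>i. int p * x i)"
  have "minors_vanish ?y (basis 1)" using assms basis_closed k_ge_2 by auto
  then have "int p ^ r j dvd ?y j"
    using j minors_vanish_first_axis_iff[of ?y 1] by (simp add: basis_def)
  moreover have "int p ^ r j dvd int p * x j - ?y j"
    using j reduce_dvd_diff[of j "\<lambda>i. int p * x i"] by simp
  ultimately have "int p ^ r j dvd (int p * x j - ?y j) + ?y j" by (rule dvd_add[rotated])
  moreover have "int p * x j dvd int p ^ (r 2 - 1) * x j"
    using r2 by (simp add: le_imp_power_dvd power_increasing[where a = "int p"] mult_dvd_mono)
  ultimately show "int p ^ r j dvd int p ^ (r 2 - 1) * x j" by (simp add: dvd_trans)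
qed

text \<open>Descent along \<open>x \<mapsto> p x\<close>: once \<open>p x\<close> is dominant, x itself commutes with the hub.\<close>
lemma reaches_hub:
  assumes "x \<in> W" and "\<forall>i\<in>{1..k}. int p ^ r i dvd int p ^ a * x i"
  shows "(x, hub) \<in> R\<^sup>*"
  using assms
proof (induction a arbitrary: x)
  case 0
  then have "x \<in> carrier G" by (simp add: reduced_vertices_def)
  then have "x i = 0" if "i \<in> {1..k}" for i
    using that "0.prems"(2) by (simp add: carrier_dvd_imp_zero)
  then have "minors_vanish x v" for v by (simp add: minors_vanish_def)
  then show ?case using "0.prems"(1) by (auto simp: reduced_minor_graph_iff)
next
  case (Suc a)
  let ?y = "reduce (\<lambda>i. int p * x i)"
  have x_y: "minors_vanish x ?y" by (rule minors_vanish_reduce_smult)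
  show ?case
  proof (cases "?y \<in> W")
    case True
    have "int p ^ r i dvd int p ^ a * ?y i" if "i \<in> {1..k}" for i
    proof -
      have "int p ^ r i dvd int p ^ a * (int p * x i - ?y i)"
        using that reduce_dvd_diff[of i "\<lambda>i. int p * x i"] by simp
      moreover have "int p ^ r i dvd int p ^ Suc a * x i" using Suc.prems(2) that by blast
      moreover have "int p ^ a * ?y i = int p ^ Suc a * x i - int p ^ a * (int p * x i - ?y i)"
        by (simp add: algebra_simps)
      ultimately show ?thesis by (metis dvd_diff)
    qed
    then have "(?y, hub) \<in> R\<^sup>*" using Suc.IH True by blast
    then show ?thesis using edge_rtrancl[OF Suc.prems(1) True x_y] by simp
  next
    case False
    then have "minors_vanish x hub"
      using hub_if_multiple_dominant reduce_closed by (simp add: reduced_minor_graph_iff)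
    with Suc.prems(1) hub_reduced show ?thesis by (rule edge_rtrancl)
  qed
qed

lemma connected_if_r2_ge_2: "\<not> induced_disconnected W minor_graph"
proof (rule connected_via_hub[OF minor_graph_sym hub_reduced])
  fix x assume "x \<in> W"
  moreover have "\<forall>i\<in>{1..k}. int p ^ r i dvd int p ^ r 1 * x i"
  proof
    fix i assume "i \<in> {1..k}"
    then have "r i \<le> r 1" using r_antimono by auto
    then show "int p ^ r i dvd int p ^ r 1 * x i" by (simp add: le_imp_power_dvd dvd_mult2)
  qed
  ultimately show "(x, hub) \<in> R\<^sup>*" by (rule reaches_hub)
qed

end

lemma reduced_minor_graph_disconnected_iff: "induced_disconnected W minor_graph \<longleftrightarrow> r 2 = 1"
proof -
  have "r 2 \<ge> 1" using r_pos k_ge_2 by auto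
  then consider "r 2 = 1" | "r 2 \<ge> 2" by linarith
  then show ?thesis using disconnected_if_r2_eq_1 connected_if_r2_ge_2 by cases auto
qed

end

theorem theorem4p6:
  fixes p k :: nat and r :: "nat \<Rightarrow> nat"
    and H :: "nat monoid" and \<pi> :: "nat \<Rightarrow> (nat \<Rightarrow> int)"
  assumes "Factorial_Ring.prime p"
    and "k \<ge> 2"
    and "\<forall>i \<in> {1..k}. r i \<ge> 1"
    and "\<forall>i j. 1 \<le> i \<longrightarrow> i \<le> j \<longrightarrow> j \<le> k \<longrightarrow> r j \<le> r i"
    and "schur_cover H (product_group {1..k} (\<lambda>i. integer_mod_group (p ^ r i))) \<pi>"
  shows "induced_disconnected
           (reduced_vertices (carrier (product_group {1..k} (\<lambda>i. integer_mod_group (p ^ r i))))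
              (deep_adj H (product_group {1..k} (\<lambda>i. integer_mod_group (p ^ r i))) \<pi>))
           (deep_adj H (product_group {1..k} (\<lambda>i. integer_mod_group (p ^ r i))) \<pi>)
         \<longleftrightarrow> r 2 = 1"
proof -
  interpret p_power_product p k r
    using assms(1-4) by unfold_locales
  have "deep_adj H G \<pi> = minor_graph"
    using assms(5) by (rule deep_adj_eq_minor_graph)
  then show ?thesis using reduced_minor_graph_disconnected_iff by simp
qed

end
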